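(* Let $(a_N)$ be a sequence of positive numbers and, for each $N$, let $P_{N,a_N}$ be the probability on sequences $(n_j)_{j\ge0}$ of nonnegative integers with $\sum_jn_j=N$ given by $P_{N,a_N}((n_j))\propto e^{-a_N\sum_jjn_j}$, with $\langle n_0\rangle_{N,a_N}$ the expectation of $n_0$. Let $\lambda_N=1-m_N/N$ with integers $0\le m_N\le N$. Suppose $\lambda_N\to\lambda\le1$ and $(1-\lambda_N)Na_N-\ln N\to\infty$. Then $P_{N,a_N}(n_0/N\ge\lambda_N)\to1$ and $\lim_{N\to\infty}\frac1N\langle n_0\rangle_{N,a_N}\ge\lambda$. If $Na_N/\ln N\to\infty$, then $\frac1N\langle n_0\rangle_{N,a_N}\to1$, i.e. there is complete Bose–Einstein condensation.
   Context: This is the canonical ensemble of $N$ noninteracting bosons in a one-dimensional harmonic trap, $n_j$ being the occupation of the $j$-th level and $a_N=\beta(\varepsilon_1-\varepsilon_0)$. *)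

theory Defs
  imports "HOL-Analysis.Analysis"
begin

definition configs :: "nat \<Rightarrow> (nat \<Rightarrow> nat) set" where
  "configs N = {n. finite {j. n j \<noteq> 0} \<and> (\<Sum>j\<in>{j. n j \<noteq> 0}. n j) = N}"

definition energy :: "(nat \<Rightarrow> nat) \<Rightarrow> nat" where
  "energy n = (\<Sum>j\<in>{j. n j \<noteq> 0}. j * n j)"

definition bweight :: "real \<Rightarrow> (nat \<Rightarrow> nat) \<Rightarrow> real" where
  "bweight a n = exp (- a * real (energy n))"

definition Zcan :: "nat \<Rightarrow> real \<Rightarrow> real" where
  "Zcan N a = infsum (bweight a) (configs N)"

definition Pcan :: "nat \<Rightarrow> real \<Rightarrow> ((nat \<Rightarrow> nat) \<Rightarrow> bool) \<Rightarrow> real" where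
  "Pcan N a A = infsum (bweight a) {n \<in> configs N. A n} / Zcan N a"

definition mean_n0 :: "nat \<Rightarrow> real \<Rightarrow> real" where
  "mean_n0 N a = infsum (\<lambda>n. real (n 0) * bweight a n) (configs N) / Zcan N a"

end

theory Submission
  imports Defs
begin

text \<open>
  Lowering every particle by one level (particles on level 0 stay) maps configurations of N
  bosons to configurations of N bosons, lowers the energy by N - n_0, and becomes injective
  once n_1 is also recorded. Hence the configurations with n_0 + m < N carry weight at most
  (N + 1) e^{-a(m+1)} Z_N, so P(n_0 + m \<ge> N) \<ge> 1 - 2 exp(-(m a - ln N)), and on this event
  n_0/N \<ge> 1 - m/N, which gives the lower bound on the liminf of the mean. For complete
  condensation choose m_N = \<lceil>(1 - \<lambda>) N\<rceil> for \<lambda> < 1: then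
  m_N a_N - ln N \<ge> (1 - \<lambda>) N a_N - ln N tends to infinity when N a_N / ln N does. Summability of the weights comes from
  Z_N \<le> (1 - e^{-a})^{-N}, obtained by adding the particles one at a time.
\<close>

lemma sum_support_eq:
  fixes n :: "'a \<Rightarrow> 'b::zero" and g :: "'a \<Rightarrow> 'c::comm_monoid_add"
  assumes "finite S" "{j. n j \<noteq> 0} \<subseteq> S" "\<And>j. n j = 0 \<Longrightarrow> g j = 0"
  shows "(\<Sum>j\<in>{j. n j \<noteq> 0}. g j) = (\<Sum>j\<in>S. g j)"
  using assms by (intro sum.mono_neutral_left) auto

lemma configs_iff_sum:
  assumes "finite S" "{j. n j \<noteq> 0} \<subseteq> S"
  shows "n \<in> configs N \<longleftrightarrow> (\<Sum>j\<in>S. n j) = N"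
  using assms finite_subset[OF assms(2,1)] sum_support_eq[OF assms, of n]
  by (auto simp: configs_def)

lemma energy_eq_sum:
  assumes "finite S" "{j. n j \<noteq> 0} \<subseteq> S"
  shows "energy n = (\<Sum>j\<in>S. j * n j)"
  unfolding energy_def using assms by (rule sum_support_eq) simp

lemma configs_finite_support: "n \<in> configs N \<Longrightarrow> finite {j. n j \<noteq> 0}"
  by (simp add: configs_def)

lemma configs_occupation_le:
  assumes "n \<in> configs N"
  shows "n j \<le> N"
proof -
  define S where "S = insert j {j. n j \<noteq> 0}"
  have S: "finite S" "{j. n j \<noteq> 0} \<subseteq> S"
    using configs_finite_support[OF assms] by (auto simp: S_def)
  have "n j \<le> (\<Sum>i\<in>S. n i)"
    using S by (intro member_le_sum) (auto simp: S_def)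
  also have "\<dots> = N"
    using assms configs_iff_sum[OF S] by simp
  finally show ?thesis .
qed

lemma configs_0: "configs 0 = {\<lambda>_. 0}"
proof -
  have "(\<lambda>_. 0) \<in> configs 0"
    by (simp add: configs_def)
  moreover have "n = (\<lambda>_. 0)" if "n \<in> configs 0" for n
    using configs_occupation_le[OF that] by auto
  ultimately show ?thesis
    by blast
qed

lemma ground_state_in_configs: "(\<lambda>j. if j = 0 then N else 0) \<in> configs N"
  by (subst configs_iff_sum[of "{0}"]) auto

lemma energy_ground_state: "energy (\<lambda>j. if j = 0 then N else 0) = 0"
  by (subst energy_eq_sum[of "{0}"]) auto

section \<open>Summability of the Boltzmann weights\<close>

definition add_particle :: "(nat \<Rightarrow> nat) \<Rightarrow> nat \<Rightarrow> nat \<Rightarrow> nat" where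
  "add_particle n l = n(l := Suc (n l))"

lemma energy_add_particle:
  assumes "finite {j. n j \<noteq> 0}"
  shows "energy (add_particle n l) = energy n + l"
proof -
  define S where "S = insert l {j. n j \<noteq> 0}"
  have S: "finite S" "{j. n j \<noteq> 0} \<subseteq> S" "{j. add_particle n l j \<noteq> 0} \<subseteq> S" "l \<in> S"
    using assms by (auto simp: S_def add_particle_def)
  have "energy (add_particle n l) = l * Suc (n l) + (\<Sum>j\<in>S - {l}. j * n j)"
    unfolding energy_eq_sum[OF S(1,3)] sum.remove[OF S(1,4)] by (simp add: add_particle_def)
  also have "\<dots> = energy n + l"
    by (simp add: energy_eq_sum[OF S(1,2)] sum.remove[OF S(1,4)])
  finally show ?thesis .
qed

lemma configs_Suc_subset: "configs (Suc N) \<subseteq> case_prod add_particle ` (configs N \<times> UNIV)"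
proof
  fix n assume n: "n \<in> configs (Suc N)"
  define S where "S = {j. n j \<noteq> 0}"
  have S: "finite S" "{j. n j \<noteq> 0} \<subseteq> S"
    using configs_finite_support[OF n] by (auto simp: S_def)
  have sum_S: "(\<Sum>j\<in>S. n j) = Suc N"
    using n configs_iff_sum[OF S] by simp
  then have "S \<noteq> {}"
    by auto
  then obtain l where l: "l \<in> S"
    by blast
  have "n l \<noteq> 0"
    using l by (simp add: S_def)
  define n' where "n' = n(l := n l - 1)"
  have "{j. n' j \<noteq> 0} \<subseteq> S"
    by (auto simp: n'_def S_def)
  moreover have "(\<Sum>j\<in>S. n' j) = N"
    using sum_S l S(1) \<open>n l \<noteq> 0\<close> by (simp add: sum.remove n'_def)
  ultimately have "n' \<in> configs N"
    using configs_iff_sum[OF S(1)] by blast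
  moreover have "n = add_particle n' l"
    using l by (auto simp: add_particle_def n'_def S_def)
  ultimately show "n \<in> case_prod add_particle ` (configs N \<times> UNIV)"
    by blast
qed

lemma bweight_pos: "bweight a n > 0"
  by (simp add: bweight_def)

lemma bweight_energy_add:
  assumes "energy n = energy n' + k"
  shows "bweight a n = bweight a n' * exp (- a) ^ k"
  by (simp add: bweight_def assms mult_exp_exp algebra_simps flip: exp_of_nat_mult)

lemma sum_power_le_geometric:
  fixes q :: real
  assumes "0 \<le> q" "q < 1" "finite L"
  shows "(\<Sum>l\<in>L. q ^ l) \<le> 1 / (1 - q)"
proof -
  have "(\<Sum>l\<in>L. q ^ l) \<le> (\<Sum>l. q ^ l)"
    using assms by (intro sum_le_suminf summable_geometric) auto
  also have "\<dots> = 1 / (1 - q)"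
    using assms by (simp add: suminf_geometric)
  finally show ?thesis .
qed

lemma sum_bweight_configs_le:
  assumes "a > 0" "finite F" "F \<subseteq> configs N"
  shows "sum (bweight a) F \<le> (1 / (1 - exp (- a))) ^ N"
  using assms(2,3)
proof (induction N arbitrary: F)
  case 0
  then have "F \<subseteq> {\<lambda>_. 0}"
    by (simp add: configs_0)
  moreover have "bweight a (\<lambda>_. 0) = 1"
    by (simp add: bweight_def energy_def)
  ultimately show ?case
    by (auto simp: subset_singleton_iff)
next
  case (Suc N)
  define q where "q = exp (- a)"
  have q: "0 \<le> q" "q < 1"
    using assms(1) by (auto simp: q_def)
  obtain C where C: "C \<subseteq> configs N \<times> UNIV" "finite C" "F = case_prod add_particle ` C"
    using finite_subset_image[OF Suc.prems(1) order_trans[OF Suc.prems(2) configs_Suc_subset]]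
    by blast
  have C_configs: "fst ` C \<subseteq> configs N"
    using C(1) by auto
  have weight: "bweight a (add_particle n l) = bweight a n * q ^ l" if "(n, l) \<in> C" for n l
    using that C(1) configs_finite_support by (auto simp: q_def intro!: bweight_energy_add energy_add_particle)
  have "sum (bweight a) F \<le> (\<Sum>p\<in>C. bweight a (case_prod add_particle p))"
    unfolding C(3) using sum_image_le[OF C(2), of "bweight a" "case_prod add_particle"]
    by (simp add: less_imp_le[OF bweight_pos] o_def)
  also have "\<dots> = (\<Sum>(n, l)\<in>C. bweight a n * q ^ l)"
    using weight by (intro sum.cong) auto
  also have "\<dots> \<le> (\<Sum>(n, l)\<in>fst ` C \<times> snd ` C. bweight a n * q ^ l)"
    using C(2) q subset_fst_snd[of C]
    by (intro sum_mono2) (auto intro!: mult_nonneg_nonneg less_imp_le[OF bweight_pos])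
  also have "\<dots> = sum (bweight a) (fst ` C) * (\<Sum>l\<in>snd ` C. q ^ l)"
    by (simp add: sum_product sum.cartesian_product)
  also have "\<dots> \<le> (1 / (1 - q)) ^ N * (1 / (1 - q))"
    using C q Suc.IH[OF finite_imageI[OF C(2)] C_configs]
    by (intro mult_mono sum_power_le_geometric sum_nonneg less_imp_le[OF bweight_pos])
      (auto simp: q_def)
  finally show ?case
    by (simp add: q_def)
qed

lemma bweight_summable_on_configs:
  assumes "a > 0"
  shows "bweight a summable_on configs N"
proof (rule nonneg_bdd_above_summable_on)
  show "bdd_above (sum (bweight a) ` {F. F \<subseteq> configs N \<and> finite F})"
    using sum_bweight_configs_le[OF assms] by (intro bdd_aboveI2) auto
qed (simp add: less_imp_le[OF bweight_pos])

lemma Zcan_ge_1: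
  assumes "a > 0"
  shows "Zcan N a \<ge> 1"
proof -
  have "1 = sum (bweight a) {\<lambda>j. if j = 0 then N else 0}"
    by (simp add: bweight_def energy_ground_state)
  also have "\<dots> \<le> Zcan N a"
    unfolding Zcan_def using ground_state_in_configs bweight_summable_on_configs[OF assms]
    by (intro finite_sum_le_infsum) (auto simp: less_imp_le[OF bweight_pos])
  finally show ?thesis .
qed

section \<open>Depletion of the ground level\<close>

definition lower_levels :: "(nat \<Rightarrow> nat) \<Rightarrow> nat \<Rightarrow> nat" where
  "lower_levels n j = (if j = 0 then n 0 else 0) + n (Suc j)"

lemma lower_levels_configs_energy:
  assumes n: "n \<in> configs N"
  shows "lower_levels n \<in> configs N" "energy n = energy (lower_levels n) + (N - n 0)"
proof -
  obtain K where "{j. n j \<noteq> 0} \<subseteq> {..<K}"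
    using configs_finite_support[OF n] finite_nat_iff_bounded by blast
  then have K: "{j. n j \<noteq> 0} \<subseteq> {..<Suc (Suc K)}"
    by auto
  have K': "{j. lower_levels n j \<noteq> 0} \<subseteq> {..<Suc K}"
    using K by (auto simp: lower_levels_def)
  have sum_n: "(\<Sum>j<Suc (Suc K). n j) = N"
    using n configs_iff_sum[OF _ K] by simp
  have "(\<Sum>j<Suc K. lower_levels n j) = n 0 + (\<Sum>j<Suc K. n (Suc j))"
    by (simp add: lower_levels_def sum.distrib)
  also have "\<dots> = N"
    using sum_n by (simp only: sum.lessThan_Suc_shift)
  finally show "lower_levels n \<in> configs N"
    using configs_iff_sum[OF _ K'] by simp
  have "energy n = (\<Sum>j<Suc K. Suc j * n (Suc j))"
    by (simp only: energy_eq_sum[OF finite_lessThan K] sum.lessThan_Suc_shift)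
  also have "\<dots> = (\<Sum>j<Suc K. j * lower_levels n j) + (\<Sum>j<Suc K. n (Suc j))"
    by (simp add: lower_levels_def sum.distrib distrib_left)
  also have "\<dots> = energy (lower_levels n) + (N - n 0)"
    using sum_n by (simp only: energy_eq_sum[OF finite_lessThan K'] sum.lessThan_Suc_shift)
  finally show "energy n = energy (lower_levels n) + (N - n 0)" .
qed

lemma inj_lower_levels: "inj (\<lambda>n. (n 1, lower_levels n))"
proof (rule injI, rule ext)
  fix n n' :: "nat \<Rightarrow> nat" and j
  assume "(n 1, lower_levels n) = (n' 1, lower_levels n')"
  then have one: "n 1 = n' 1" and lower: "\<And>i. lower_levels n i = lower_levels n' i"
    by simp_all
  consider "j = 0" | "j = 1" | k where "j = Suc (Suc k)"
    by (metis One_nat_def not0_implies_Suc)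
  then show "n j = n' j"
    by cases (use one lower[of 0] lower[of "j - 1"] in \<open>auto simp: lower_levels_def\<close>)
qed

lemma infsum_bweight_depleted_le:
  assumes "a > 0"
  shows "infsum (bweight a) {n \<in> configs N. n 0 + m < N}
           \<le> (real N + 1) * exp (- a) ^ Suc m * Zcan N a"
proof (rule infsum_le_finite_sums)
  show "bweight a summable_on {n \<in> configs N. n 0 + m < N}"
    by (rule summable_on_subset_banach[OF bweight_summable_on_configs[OF assms]]) auto
  fix F assume F: "finite F" "F \<subseteq> {n \<in> configs N. n 0 + m < N}"
  define q where "q = exp (- a)"
  have q: "0 \<le> q" "q \<le> 1"
    using assms by (auto simp: q_def)
  have weight: "bweight a n \<le> q ^ Suc m * bweight a (lower_levels n)" if "n \<in> F" for n
  proof -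
    have n: "n \<in> configs N" "Suc m \<le> N - n 0"
      using that F by auto
    have "bweight a n = bweight a (lower_levels n) * q ^ (N - n 0)"
      unfolding q_def by (rule bweight_energy_add[OF lower_levels_configs_energy(2)[OF n(1)]])
    also have "\<dots> \<le> bweight a (lower_levels n) * q ^ Suc m"
      using n(2) q by (intro mult_left_mono power_decreasing less_imp_le[OF bweight_pos])
    finally show ?thesis
      by (simp add: mult.commute)
  qed
  have "(\<Sum>n\<in>F. bweight a (lower_levels n))
          = (\<Sum>p\<in>(\<lambda>n. (n 1, lower_levels n)) ` F. bweight a (snd p))"
    using inj_on_subset[OF inj_lower_levels] by (simp add: sum.reindex)
  also have "\<dots> \<le> (\<Sum>p\<in>{..N} \<times> lower_levels ` F. bweight a (snd p))"
    using F configs_occupation_le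
    by (intro sum_mono2) (auto simp: less_imp_le[OF bweight_pos])
  also have "\<dots> = (real N + 1) * sum (bweight a) (lower_levels ` F)"
    by (simp add: sum.cartesian_product')
  also have "\<dots> \<le> (real N + 1) * Zcan N a"
    unfolding Zcan_def using F lower_levels_configs_energy(1) bweight_summable_on_configs[OF assms]
    by (intro mult_left_mono finite_sum_le_infsum) (auto simp: less_imp_le[OF bweight_pos])
  finally have "(\<Sum>n\<in>F. bweight a (lower_levels n)) \<le> (real N + 1) * Zcan N a" .
  then have "sum (bweight a) F \<le> q ^ Suc m * ((real N + 1) * Zcan N a)"
    using weight q
    by (intro order_trans[OF sum_mono[OF weight]]) (simp_all add: sum_distrib_left[symmetric] mult_left_mono)
  then show "sum (bweight a) F \<le> (real N + 1) * exp (- a) ^ Suc m * Zcan N a"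
    by (simp add: q_def mult_ac)
qed

lemma Pcan_nonneg: "0 \<le> Pcan N a A"
  unfolding Pcan_def Zcan_def
  by (intro divide_nonneg_nonneg infsum_nonneg) (simp_all add: less_imp_le[OF bweight_pos])

lemma Pcan_compl:
  assumes "a > 0"
  shows "Pcan N a (\<lambda>n. \<not> A n) = 1 - Pcan N a A"
proof -
  define G where "G = {n \<in> configs N. A n}"
  define B where "B = {n \<in> configs N. \<not> A n}"
  have "Zcan N a = infsum (bweight a) G + infsum (bweight a) B"
    unfolding Zcan_def G_def B_def using bweight_summable_on_configs[OF assms]
    by (subst infsum_Un_disjoint[symmetric])
      (auto intro: summable_on_subset_banach intro!: arg_cong[where f = "infsum _"])
  then show ?thesis
    using Zcan_ge_1[OF assms, of N] by (simp add: Pcan_def G_def B_def field_simps)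
qed

lemma Pcan_le_1:
  assumes "a > 0"
  shows "Pcan N a A \<le> 1"
  using Pcan_compl[OF assms, of N "\<lambda>n. \<not> A n"] Pcan_nonneg[of N a] by simp

lemma Pcan_condensate_ge:
  assumes "a > 0"
  shows "1 - (real N + 1) * exp (- a) ^ Suc m \<le> Pcan N a (\<lambda>n. N \<le> n 0 + m)"
proof -
  have "Pcan N a (\<lambda>n. n 0 + m < N) \<le> (real N + 1) * exp (- a) ^ Suc m"
    using infsum_bweight_depleted_le[OF assms, of N m] Zcan_ge_1[OF assms, of N]
    by (simp add: Pcan_def divide_le_eq)
  then show ?thesis
    using Pcan_compl[OF assms, of N "\<lambda>n. n 0 + m < N"] by (simp add: not_less)
qed

lemma n0_bweight_le: "n \<in> configs N \<Longrightarrow> real (n 0) * bweight a n \<le> real N * bweight a n"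
  by (intro mult_right_mono) (simp_all add: configs_occupation_le less_imp_le[OF bweight_pos])

lemma n0_bweight_summable_on_configs:
  assumes "a > 0"
  shows "(\<lambda>n. real (n 0) * bweight a n) summable_on configs N"
  using summable_on_cmult_right[OF bweight_summable_on_configs[OF assms], of "real N"]
  by (rule summable_on_comparison_test) (simp_all add: n0_bweight_le less_imp_le[OF bweight_pos])

lemma mean_n0_le:
  assumes "a > 0"
  shows "mean_n0 N a \<le> real N"
proof -
  have "infsum (\<lambda>n. real (n 0) * bweight a n) (configs N) \<le> infsum (\<lambda>n. real N * bweight a n) (configs N)"
    using n0_bweight_summable_on_configs[OF assms] bweight_summable_on_configs[OF assms]
    by (intro infsum_mono summable_on_cmult_right) (simp_all add: n0_bweight_le)
  also have "\<dots> = real N * Zcan N a"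
    unfolding Zcan_def by (simp add: infsum_cmult_right')
  finally show ?thesis
    using Zcan_ge_1[OF assms, of N] by (simp add: mean_n0_def divide_le_eq)
qed

lemma mean_n0_ge:
  assumes "a > 0"
  shows "(real N - real m) * Pcan N a (\<lambda>n. N \<le> n 0 + m) \<le> mean_n0 N a"
proof -
  define G where "G = {n \<in> configs N. N \<le> n 0 + m}"
  have "(real N - real m) * infsum (bweight a) G = infsum (\<lambda>n. (real N - real m) * bweight a n) G"
    by (simp add: infsum_cmult_right')
  also have "\<dots> \<le> infsum (\<lambda>n. real (n 0) * bweight a n) G"
    using bweight_summable_on_configs[OF assms] n0_bweight_summable_on_configs[OF assms]
    by (intro infsum_mono summable_on_cmult_right)
      (auto simp: G_def intro: summable_on_subset_banach mult_right_mono less_imp_le[OF bweight_pos])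
  also have "\<dots> \<le> infsum (\<lambda>n. real (n 0) * bweight a n) (configs N)"
    using n0_bweight_summable_on_configs[OF assms]
    by (intro infsum_mono_neutral)
      (auto simp: G_def intro: summable_on_subset_banach simp: less_imp_le[OF bweight_pos])
  finally have "(real N - real m) * infsum (bweight a) G / Zcan N a \<le> mean_n0 N a"
    unfolding mean_n0_def using Zcan_ge_1[OF assms, of N] by (intro divide_right_mono) auto
  then show ?thesis
    by (simp add: Pcan_def G_def)
qed

section \<open>Asymptotics\<close>

lemma condensate_fraction_iff:
  assumes "N > 0"
  shows "1 - real m / real N \<le> real k / real N \<longleftrightarrow> N \<le> k + m"
proof -
  have "1 - real m / real N = (real N - real m) / real N"
    using assms by (simp add: diff_divide_distrib)
  then have "1 - real m / real N \<le> real k / real N \<longleftrightarrow> real N - real m \<le> real k"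
    using assms by (simp add: divide_le_cancel)
  then show ?thesis
    by linarith
qed

lemma depletion_bound_le_exp:
  assumes "a > 0" "N > 0"
  shows "(real N + 1) * exp (- a) ^ Suc m \<le> 2 * exp (- (real m * a - ln (real N)))"
proof -
  have "exp (- a) ^ Suc m \<le> exp (- (real m * a))"
    using assms(1) by (simp add: mult.commute flip: exp_of_nat_mult)
  moreover have "real N + 1 \<le> 2 * real N"
    using assms(2) by simp
  ultimately have "(real N + 1) * exp (- a) ^ Suc m \<le> 2 * real N * exp (- (real m * a))"
    by (intro mult_mono) auto
  also have "\<dots> = 2 * exp (- (real m * a - ln (real N)))"
    using assms(2) by (simp add: exp_diff exp_minus field_simps)
  finally show ?thesis .
qed

lemma Pcan_condensate_tendsto_1:
  assumes apos: "\<And>N. a N > 0"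
    and exponent: "filterlim (\<lambda>N. real (m N) * a N - ln (real N)) at_top sequentially"
  shows "(\<lambda>N. Pcan N (a N) (\<lambda>n. N \<le> n 0 + m N)) \<longlonglongrightarrow> 1"
proof (rule tendsto_sandwich)
  have "(\<lambda>N. exp (- (real (m N) * a N - ln (real N)))) \<longlonglongrightarrow> 0"
    using exponent by (intro filterlim_compose[OF exp_at_bot]) (simp add: filterlim_uminus_at_bot)
  from tendsto_diff[OF tendsto_const tendsto_mult[OF tendsto_const this], of 1 2]
  show "(\<lambda>N. 1 - 2 * exp (- (real (m N) * a N - ln (real N)))) \<longlonglongrightarrow> 1"
    by simp
  show "\<forall>\<^sub>F N in sequentially.
          1 - 2 * exp (- (real (m N) * a N - ln (real N))) \<le> Pcan N (a N) (\<lambda>n. N \<le> n 0 + m N)"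
    using eventually_gt_at_top[of 0]
  proof eventually_elim
    case (elim N)
    then show ?case
      using depletion_bound_le_exp[OF apos[of N] elim, of "m N"]
        Pcan_condensate_ge[OF apos[of N], of N "m N"]
      by linarith
  qed
  show "\<forall>\<^sub>F N in sequentially. Pcan N (a N) (\<lambda>n. N \<le> n 0 + m N) \<le> 1"
    by (simp add: Pcan_le_1 apos)
qed simp

lemma liminf_mean_n0_fraction_ge:
  assumes apos: "\<And>N. a N > 0"
    and fraction: "(\<lambda>N. 1 - real (m N) / real N) \<longlonglongrightarrow> lam"
    and exponent: "filterlim (\<lambda>N. real (m N) * a N - ln (real N)) at_top sequentially"
  shows "ereal lam \<le> liminf (\<lambda>N. ereal (mean_n0 N (a N) / real N))"
proof -
  define P where "P N = Pcan N (a N) (\<lambda>n. N \<le> n 0 + m N)" for N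
  have "(\<lambda>N. ereal ((1 - real (m N) / real N) * P N)) \<longlonglongrightarrow> ereal lam"
    using tendsto_mult[OF fraction Pcan_condensate_tendsto_1[OF apos exponent]]
    by (simp add: P_def)
  then have "ereal lam = liminf (\<lambda>N. ereal ((1 - real (m N) / real N) * P N))"
    by (rule lim_imp_Liminf[symmetric, rotated]) simp
  also have "\<dots> \<le> liminf (\<lambda>N. ereal (mean_n0 N (a N) / real N))"
  proof (intro Liminf_mono)
    show "\<forall>\<^sub>F N in sequentially. ereal ((1 - real (m N) / real N) * P N)
            \<le> ereal (mean_n0 N (a N) / real N)"
      using eventually_gt_at_top[of 0]
    proof eventually_elim
      case (elim N)
      then have "(1 - real (m N) / real N) * P N = (real N - real (m N)) * P N / real N"
        by (simp add: field_simps)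
      also have "\<dots> \<le> mean_n0 N (a N) / real N"
        using mean_n0_ge[OF apos, of N "m N"] by (simp add: P_def divide_right_mono)
      finally show ?case
        by simp
    qed
  qed
  finally show ?thesis .
qed

lemma filterlim_mult_minus_ln_at_top:
  fixes a :: "nat \<Rightarrow> real"
  assumes "c > 0" and growth: "filterlim (\<lambda>N. real N * a N / ln (real N)) at_top sequentially"
  shows "filterlim (\<lambda>N. c * real N * a N - ln (real N)) at_top sequentially"
proof -
  have product: "filterlim (\<lambda>N. ln (real N) * (c * (real N * a N / ln (real N)) - 1)) at_top sequentially"
  proof (rule filterlim_at_top_mult_at_top)
    show "filterlim (\<lambda>N. ln (real N)) at_top sequentially"
      by (rule filterlim_compose[OF ln_at_top filterlim_real_sequentially])
    have "filterlim (\<lambda>N. - 1 + c * (real N * a N / ln (real N))) at_top sequentially"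
      using assms(1) growth
      by (intro filterlim_tendsto_add_at_top[OF tendsto_const] filterlim_tendsto_pos_mult_at_top) auto
    then show "filterlim (\<lambda>N. c * (real N * a N / ln (real N)) - 1) at_top sequentially"
      by simp
  qed
  have eq: "\<forall>\<^sub>F N in sequentially.
                   ln (real N) * (c * (real N * a N / ln (real N)) - 1) = c * real N * a N - ln (real N)"
    using eventually_gt_at_top[of 1] by eventually_elim (simp add: field_simps)
  show ?thesis
    by (rule iffD1[OF filterlim_cong[OF refl refl eq] product])
qed

lemma tendsto_ceiling_fraction:
  assumes "c \<ge> 0"
  shows "(\<lambda>N. real (nat \<lceil>c * real N\<rceil>) / real N) \<longlonglongrightarrow> c"
proof (rule tendsto_sandwich)
  show "\<forall>\<^sub>F N in sequentially. c \<le> real (nat \<lceil>c * real N\<rceil>) / real N"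
    using eventually_gt_at_top[of 0]
    by eventually_elim (simp add: le_divide_eq assms mult.commute)
  show "\<forall>\<^sub>F N in sequentially. real (nat \<lceil>c * real N\<rceil>) / real N \<le> c + 1 / real N"
    using eventually_gt_at_top[of 0]
    by eventually_elim (simp add: divide_le_eq assms distrib_right; linarith)
  show "(\<lambda>N. c + 1 / real N) \<longlonglongrightarrow> c"
    using tendsto_add[OF tendsto_const lim_1_over_n, of c] by simp
qed simp

lemma mean_n0_fraction_tendsto_1:
  assumes apos: "\<And>N. a N > 0"
    and growth: "filterlim (\<lambda>N. real N * a N / ln (real N)) at_top sequentially"
  shows "(\<lambda>N. mean_n0 N (a N) / real N) \<longlonglongrightarrow> 1"
proof (rule order_tendstoI)
  fix y :: real
  assume "y < 1"
  then obtain lam where lam: "max y 0 < lam" "lam < 1"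
    using dense[of "max y 0" 1] by auto
  define m where "m N = nat \<lceil>(1 - lam) * real N\<rceil>" for N
  have fraction: "(\<lambda>N. 1 - real (m N) / real N) \<longlonglongrightarrow> 1 - (1 - lam)"
    unfolding m_def using lam by (intro tendsto_diff tendsto_const tendsto_ceiling_fraction) simp
  have exponent: "filterlim (\<lambda>N. real (m N) * a N - ln (real N)) at_top sequentially"
  proof (rule filterlim_at_top_mono[OF filterlim_mult_minus_ln_at_top[OF _ growth]])
    show "\<forall>\<^sub>F N in sequentially.
            (1 - lam) * real N * a N - ln (real N) \<le> real (m N) * a N - ln (real N)"
      using apos lam by (intro always_eventually allI) (simp add: m_def mult_right_mono)
  qed (use lam in simp)
  have "ereal (1 - (1 - lam)) \<le> liminf (\<lambda>N. ereal (mean_n0 N (a N) / real N))"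
    by (rule liminf_mean_n0_fraction_ge[OF apos fraction exponent])
  moreover have "ereal y < ereal (1 - (1 - lam))"
    using lam by simp
  ultimately have "ereal y < liminf (\<lambda>N. ereal (mean_n0 N (a N) / real N))"
    by (rule order_less_le_trans[rotated])
  then show "\<forall>\<^sub>F N in sequentially. y < mean_n0 N (a N) / real N"
    by (auto dest: less_LiminfD)
next
  fix y :: real
  assume "1 < y"
  have "mean_n0 N (a N) / real N \<le> 1" for N
    using mean_n0_le[OF apos, of N] by (cases "N = 0") (simp_all add: divide_le_eq)
  then show "\<forall>\<^sub>F N in sequentially. mean_n0 N (a N) / real N < y"
    using \<open>1 < y\<close> by (intro always_eventually allI) (rule order_le_less_trans)
qed

theorem proposition3:
  fixes a :: "nat \<Rightarrow> real"
  assumes apos: "\<And>N. a N > 0"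
  shows "(\<forall>(m :: nat \<Rightarrow> nat) (lam :: real).
            (\<forall>N. m N \<le> N)
          \<longrightarrow> ((\<lambda>N. 1 - real (m N) / real N) \<longlonglongrightarrow> lam)
          \<longrightarrow> lam \<le> 1
          \<longrightarrow> filterlim (\<lambda>N. (1 - (1 - real (m N) / real N)) * real N * a N - ln (real N))
                at_top sequentially
          \<longrightarrow> ((\<lambda>N. Pcan N (a N)
                   (\<lambda>n. real (n 0) / real N \<ge> 1 - real (m N) / real N)) \<longlonglongrightarrow> 1)
              \<and> liminf (\<lambda>N. ereal (mean_n0 N (a N) / real N)) \<ge> ereal lam)
       \<and> (filterlim (\<lambda>N. real N * a N / ln (real N)) at_top sequentially
          \<longrightarrow> ((\<lambda>N. mean_n0 N (a N) / real N) \<longlonglongrightarrow> 1))"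
proof (intro conjI allI impI)
  fix m :: "nat \<Rightarrow> nat" and lam :: real
  assume fraction: "(\<lambda>N. 1 - real (m N) / real N) \<longlonglongrightarrow> lam"
    and exponent_frac: "filterlim (\<lambda>N. (1 - (1 - real (m N) / real N)) * real N * a N - ln (real N))
           at_top sequentially"
  have eq: "\<forall>\<^sub>F N in sequentially.
      (1 - (1 - real (m N) / real N)) * real N * a N - ln (real N) = real (m N) * a N - ln (real N)"
    using eventually_gt_at_top[of 0] by eventually_elim simp
  have exponent: "filterlim (\<lambda>N. real (m N) * a N - ln (real N)) at_top sequentially"
    by (rule iffD1[OF filterlim_cong[OF refl refl eq] exponent_frac])
  have "\<forall>\<^sub>F N in sequentially. Pcan N (a N) (\<lambda>n. N \<le> n 0 + m N)
          = Pcan N (a N) (\<lambda>n. real (n 0) / real N \<ge> 1 - real (m N) / real N)"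
    using eventually_gt_at_top[of 0] by eventually_elim (simp add: condensate_fraction_iff)
  with Pcan_condensate_tendsto_1[OF apos exponent]
  show "(\<lambda>N. Pcan N (a N) (\<lambda>n. real (n 0) / real N \<ge> 1 - real (m N) / real N)) \<longlonglongrightarrow> 1"
    by (rule Lim_transform_eventually)
  show "liminf (\<lambda>N. ereal (mean_n0 N (a N) / real N)) \<ge> ereal lam"
    by (rule liminf_mean_n0_fraction_ge[OF apos fraction exponent])
next
  assume "filterlim (\<lambda>N. real N * a N / ln (real N)) at_top sequentially"
  then show "(\<lambda>N. mean_n0 N (a N) / real N) \<longlonglongrightarrow> 1"
    by (rule mean_n0_fraction_tendsto_1[OF apos])
qed

end
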